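(* Let $v_1,\dots,v_n\in\mathbb{R}^k$ span $\mathbb{R}^k$ and satisfy the $1/2$-sandwich condition. Then there is a centered ellipsoid passing through $v_1,\dots,v_n$, i.e. there is a symmetric positive semidefinite $k\times k$ matrix $M$ with $v_i^TMv_i=1$ for all $i$.
   Context: For $v_1,\dots,v_n\in\mathbb{R}^k$ with $S=\sum_{j=1}^n v_jv_j^T$ invertible and $0<\beta<1$, let $\mathcal{E}_\beta(v_1,\dots,v_n)=\{x\in\mathbb{R}^k: x^TS^{-1}x\le\beta\}$ and $\mathcal{E}_1(v_1,\dots,v_n)=\{x: x^TS^{-1}x\le 1\}$. The points satisfy the $\beta$-sandwich condition if $\{v_1,\dots,v_n\}\subseteq\mathcal{E}_1(v_1,\dots,v_n)\setminus\mathcal{E}_\beta(v_1,\dots,v_n)$. A centered ellipsoid is described by a positive semidefinite matrix $M$ and passes through $v$ if $v^TMv=1$. *)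

theory Defs
  imports "HOL-Analysis.Analysis"
begin

text \<open>Points v_1..v_n are represented as v 0, ..., v (n-1).
  scatter n v is S = sum_j v_j v_j^T.\<close>

definition scatter :: "nat \<Rightarrow> (nat \<Rightarrow> real^'k) \<Rightarrow> real^'k^'k" where
  "scatter n v = (\<Sum>j<n. (\<chi> a b. (v j)$a * (v j)$b))"

definition ellipsoid_E :: "real \<Rightarrow> nat \<Rightarrow> (nat \<Rightarrow> real^'k) \<Rightarrow> (real^'k) set" where
  "ellipsoid_E \<beta> n v = {x. x \<bullet> (matrix_inv (scatter n v) *v x) \<le> \<beta>}"

definition beta_sandwich :: "real \<Rightarrow> nat \<Rightarrow> (nat \<Rightarrow> real^'k) \<Rightarrow> bool" where
  "beta_sandwich \<beta> n v \<longleftrightarrow>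
     (\<forall>i<n. v i \<in> ellipsoid_E 1 n v - ellipsoid_E \<beta> n v)"

end

theory Submission
  imports Defs "Jordan_Normal_Form.Determinant"
begin

text \<open>Let \<open>T = S\<^sup>-\<^sup>1\<close>, \<open>w\<^sub>j = T v\<^sub>j\<close> and \<open>G\<^sub>i\<^sub>j = (v\<^sub>i\<^sup>T T v\<^sub>j)\<^sup>2\<close>. For weights \<open>d \<ge> 0\<close> the matrix
  \<open>M = \<Sum>\<^sub>j d\<^sub>j w\<^sub>j w\<^sub>j\<^sup>T\<close> is positive semidefinite with \<open>v\<^sub>i\<^sup>T M v\<^sub>i = (G d)\<^sub>i\<close>, so it suffices to solve
  \<open>G d = 1\<close> with \<open>d \<ge> 0\<close>. Writing \<open>t\<^sub>i = v\<^sub>i\<^sup>T T v\<^sub>i\<close>, the diagonal of \<open>G\<close> is \<open>t\<^sub>i\<^sup>2\<close> and, since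
  \<open>\<Sum>\<^sub>j v\<^sub>j v\<^sub>j\<^sup>T = S\<close>, its row sums are \<open>t\<^sub>i\<close>. Hence every off-diagonal row sum \<open>t\<^sub>i - t\<^sub>i\<^sup>2\<close> is at
  most \<open>1/4\<close>, while the sandwich condition \<open>t\<^sub>j > 1/2\<close> makes every diagonal entry exceed \<open>1/4\<close>.
  Such a nonnegative matrix is strictly diagonally dominant, hence nonsingular, and comparing the
  rows of \<open>G d = 1\<close> at a minimal and a maximal entry of \<open>d\<close> shows that \<open>d \<ge> 0\<close>.\<close>

lemma finite_has_max_value:
  fixes f :: "'a \<Rightarrow> 'b::linorder"
  assumes "finite A" "A \<noteq> {}"
  shows "\<exists>m\<in>A. \<forall>j\<in>A. f j \<le> f m"
proof -
  have "Max (f ` A) \<in> f ` A" using assms by simp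
  then obtain m where "m \<in> A" "f m = Max (f ` A)" by auto
  then show ?thesis using assms by (metis Max_ge finite_imageI imageI)
qed

lemma sum_split_diag:
  fixes G :: "nat \<Rightarrow> nat \<Rightarrow> real"
  assumes "i < n"
  shows "(\<Sum>j<n. G i j * x j) = G i i * x i + (\<Sum>j\<in>{..<n}-{i}. G i j * x j)"
  using sum.remove[of "{..<n}" i "\<lambda>j. G i j * x j"] assms by simp

lemma strictly_diag_dominant_kernel_trivial:
  fixes G :: "nat \<Rightarrow> nat \<Rightarrow> real"
  assumes dominant: "\<And>i. i < n \<Longrightarrow> (\<Sum>j\<in>{..<n}-{i}. \<bar>G i j\<bar>) < \<bar>G i i\<bar>"
    and kernel: "\<And>i. i < n \<Longrightarrow> (\<Sum>j<n. G i j * x j) = 0"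
  shows "\<forall>j<n. x j = 0"
proof (cases "n = 0")
  case False
  then obtain m where m: "m < n" "\<And>j. j < n \<Longrightarrow> \<bar>x j\<bar> \<le> \<bar>x m\<bar>"
    using finite_has_max_value[of "{..<n}" "\<lambda>j. \<bar>x j\<bar>"] by auto
  have "\<bar>G m m\<bar> * \<bar>x m\<bar> = \<bar>\<Sum>j\<in>{..<n}-{m}. G m j * x j\<bar>"
    using sum_split_diag[OF m(1), of G x] kernel[OF m(1)]
    by (metis abs_minus_cancel abs_mult add_eq_0_iff)
  also have "\<dots> \<le> (\<Sum>j\<in>{..<n}-{m}. \<bar>G m j\<bar> * \<bar>x m\<bar>)"
    using m(2) by (auto intro!: order.trans[OF sum_abs] sum_mono simp: abs_mult mult_left_mono)
  finally have "(\<bar>G m m\<bar> - (\<Sum>j\<in>{..<n}-{m}. \<bar>G m j\<bar>)) * \<bar>x m\<bar> \<le> 0"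
    by (simp add: sum_distrib_left sum_distrib_right algebra_simps)
  then have "\<bar>x m\<bar> \<le> 0"
    using dominant[OF m(1)] by (simp add: mult_le_0_iff)
  then show ?thesis using m(2) by force
qed simp

lemma linear_system_solvable_if_kernel_trivial:
  fixes G :: "nat \<Rightarrow> nat \<Rightarrow> real"
  assumes kernel: "\<And>x. (\<forall>i<n. (\<Sum>j<n. G i j * x j) = 0) \<Longrightarrow> \<forall>j<n. x j = 0"
  shows "\<exists>x. \<forall>i<n. (\<Sum>j<n. G i j * x j) = b i"
proof -
  define A where "A = Matrix.mat n n (\<lambda>(i,j). G i j)"
  have A: "A \<in> carrier_mat n n" unfolding A_def by simp
  have mult_vec: "vec_index (A *\<^sub>v w) i = (\<Sum>j<n. G i j * vec_index w j)" if "w \<in> carrier_vec n" "i < n" for w i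
    using that unfolding A_def scalar_prod_def by (auto simp: lessThan_atLeast0 scalar_prod_def intro!: sum.cong)
  have "det A \<noteq> 0"
  proof
    assume "det A = 0"
    then obtain w where w: "w \<in> carrier_vec n" "w \<noteq> 0\<^sub>v n" "A *\<^sub>v w = 0\<^sub>v n"
      using det_0_iff_vec_prod_zero[OF A] by auto
    have "\<forall>i<n. (\<Sum>j<n. G i j * vec_index w j) = 0"
      using mult_vec[OF w(1)] w(3) by (metis index_zero_vec(1))
    from kernel[OF this] have "w = 0\<^sub>v n" using w(1) by (intro eq_vecI) auto
    with w(2) show False by simp
  qed
  then obtain B where B: "B \<in> carrier_mat n n" "A * B = 1\<^sub>m n"
    using det_non_zero_imp_unit[OF A, of "()"] unfolding Units_def ring_mat_def by auto
  define c where "c = Matrix.vec n b"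
  have "A *\<^sub>v (B *\<^sub>v c) = c"
    using A B unfolding c_def by (metis assoc_mult_mat_vec one_mult_mat_vec vec_carrier)
  then have "\<forall>i<n. (\<Sum>j<n. G i j * vec_index (B *\<^sub>v c) j) = b i"
    using mult_vec[of "B *\<^sub>v c"] B(1) unfolding c_def by (metis index_vec mult_mat_vec_carrier vec_carrier)
  then show ?thesis by blast
qed

lemma nonneg_solution_if_diag_exceeds_offdiag_sums:
  fixes G :: "nat \<Rightarrow> nat \<Rightarrow> real"
  assumes nonneg: "\<And>i j. i < n \<Longrightarrow> j < n \<Longrightarrow> 0 \<le> G i j"
    and dominant: "\<And>i j. i < n \<Longrightarrow> j < n \<Longrightarrow> (\<Sum>k\<in>{..<n}-{j}. G j k) < G i i"
    and solution: "\<And>i. i < n \<Longrightarrow> (\<Sum>j<n. G i j * d j) = 1"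
    and "j < n"
  shows "0 \<le> d j"
proof (rule ccontr)
  assume "\<not> 0 \<le> d j"
  define r where "r i = (\<Sum>k\<in>{..<n}-{i}. G i k)" for i
  have r_nonneg: "0 \<le> r i" if "i < n" for i
    unfolding r_def using nonneg that by (auto intro: sum_nonneg)
  obtain m where m: "m < n" "\<And>j. j < n \<Longrightarrow> d m \<le> d j"
    using finite_has_max_value[of "{..<n}" "\<lambda>j. - d j"] \<open>j < n\<close> by auto
  obtain M where M: "M < n" "\<And>j. j < n \<Longrightarrow> d j \<le> d M"
    using finite_has_max_value[of "{..<n}" d] \<open>j < n\<close> by auto
  have "d m < 0" using m \<open>j < n\<close> \<open>\<not> 0 \<le> d j\<close> by force
  have "(\<Sum>j\<in>{..<n}-{m}. G m j * d j) \<le> r m * d M"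
    unfolding r_def sum_distrib_right using M(2) m(1) nonneg by (auto intro!: sum_mono mult_left_mono)
  then have row_m: "1 \<le> G m m * d m + r m * d M"
    using solution[OF m(1)] sum_split_diag[OF m(1), of G d] by simp
  have "r M * d m \<le> (\<Sum>j\<in>{..<n}-{M}. G M j * d j)"
    unfolding r_def sum_distrib_right using m(2) M(1) nonneg by (auto intro!: sum_mono mult_left_mono)
  then have row_M: "G M M * d M + r M * d m \<le> 1"
    using solution[OF M(1)] sum_split_diag[OF M(1), of G d] by simp
  have "r m < G M M" "r M < G m m"
    using dominant m(1) M(1) unfolding r_def by auto
  have "G M M * (1 - G m m * d m) \<le> G M M * (r m * d M)"
    "r m * (G M M * d M) \<le> r m * (1 - r M * d m)"
    using row_m row_M r_nonneg[OF m(1)] \<open>r m < G M M\<close> by (auto intro!: mult_left_mono)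
  then have "(G M M - r m) + (- d m) * (G m m * G M M - r m * r M) \<le> 0"
    by (simp add: algebra_simps)
  moreover have "r m * r M < G m m * G M M"
    using \<open>r m < G M M\<close> \<open>r M < G m m\<close> r_nonneg m(1) M(1)
    by (metis mult.commute mult_strict_mono' order.strict_implies_order)
  ultimately show False
    using \<open>d m < 0\<close> \<open>r m < G M M\<close>
    by (metis add_pos_nonneg diff_gt_0_iff_gt linorder_not_less mult_pos_pos neg_0_less_iff_less less_imp_le)
qed

lemma ex_nonneg_solution_if_diag_exceeds_offdiag_sums:
  fixes G :: "nat \<Rightarrow> nat \<Rightarrow> real"
  assumes nonneg: "\<And>i j. i < n \<Longrightarrow> j < n \<Longrightarrow> 0 \<le> G i j"
    and dominant: "\<And>i j. i < n \<Longrightarrow> j < n \<Longrightarrow> (\<Sum>k\<in>{..<n}-{j}. G j k) < G i i"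
  shows "\<exists>d. (\<forall>j<n. 0 \<le> d j) \<and> (\<forall>i<n. (\<Sum>j<n. G i j * d j) = 1)"
proof -
  have "\<forall>j<n. x j = 0" if "\<forall>i<n. (\<Sum>j<n. G i j * x j) = 0" for x
    using strictly_diag_dominant_kernel_trivial[of n G x] that dominant nonneg by auto
  then obtain d where "\<forall>i<n. (\<Sum>j<n. G i j * d j) = 1"
    using linear_system_solvable_if_kernel_trivial[of n G "\<lambda>_. 1"] by blast
  then show ?thesis
    using nonneg_solution_if_diag_exceeds_offdiag_sums[OF nonneg dominant] by blast
qed

definition outer_prod :: "real^'k \<Rightarrow> real^'k \<Rightarrow> real^'k^'k" where
  "outer_prod x y = (\<chi> a b. x $ a * y $ b)"

lemma outer_prod_mult_vec: "outer_prod x y *v z = (y \<bullet> z) *\<^sub>R x"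
  by (simp add: Finite_Cartesian_Product.vec_eq_iff outer_prod_def matrix_vector_mult_def inner_vec_def
      sum_distrib_left algebra_simps)

lemma sum_matrix_vector_mult:
  fixes f :: "'i \<Rightarrow> real^'n^'m"
  shows "(\<Sum>i\<in>A. f i) *v x = (\<Sum>i\<in>A. f i *v x)"
  by (induction A rule: infinite_finite_induct) (auto simp: matrix_vector_mult_add_rdistrib)

lemma quadratic_form_weighted_outer_prod_sum:
  "x \<bullet> ((\<Sum>j\<in>A. c j *\<^sub>R outer_prod (w j) (w j)) *v x) = (\<Sum>j\<in>A. c j * (w j \<bullet> x)\<^sup>2)"
  by (simp add: sum_matrix_vector_mult outer_prod_mult_vec inner_sum_right inner_commute
      power2_eq_square mult.assoc flip: scaleR_matrix_vector_assoc)

lemma transpose_weighted_outer_prod_sum: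
  "transpose (\<Sum>j\<in>A. c j *\<^sub>R outer_prod (w j) (w j)) = (\<Sum>j\<in>A. c j *\<^sub>R outer_prod (w j) (w j))"
  by (simp add: Finite_Cartesian_Product.vec_eq_iff transpose_def outer_prod_def sum_component mult.commute)

lemma scatter_eq_sum_outer_prod: "scatter n v = (\<Sum>j<n. 1 *\<^sub>R outer_prod (v j) (v j))"
  by (simp add: scatter_def outer_prod_def)

lemma transpose_scatter: "transpose (scatter n v) = scatter n v"
  unfolding scatter_eq_sum_outer_prod by (rule transpose_weighted_outer_prod_sum)

lemma scatter_quadratic_form: "x \<bullet> (scatter n v *v x) = (\<Sum>j<n. (v j \<bullet> x)\<^sup>2)"
  unfolding scatter_eq_sum_outer_prod quadratic_form_weighted_outer_prod_sum by simp

lemma invertible_scatter: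
  assumes "span (v ` {..<n}) = UNIV"
  shows "invertible (scatter n v)"
proof -
  have "x = 0" if "scatter n v *v x = 0" for x
  proof -
    have "\<forall>j<n. v j \<bullet> x = 0"
      using scatter_quadratic_form[of x n v] that by (simp add: sum_nonneg_eq_0_iff)
    then have "real_inner_class.orthogonal x y" if "y \<in> v ` {..<n}" for y
      using that by (auto simp: real_inner_class.orthogonal_def inner_commute)
    then have "real_inner_class.orthogonal x x"
      using orthogonal_to_span[of x "v ` {..<n}"] assms by auto
    then show "x = 0" by (simp add: real_inner_class.orthogonal_def)
  qed
  then show ?thesis
    using matrix_left_invertible_ker invertible_left_inverse by blast
qed

lemma matrix_inv_inverse:
  assumes "invertible A"
  shows "A ** matrix_inv A = Finite_Cartesian_Product.mat 1" "matrix_inv A ** A = Finite_Cartesian_Product.mat 1"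
  using someI_ex[OF assms[unfolded invertible_def]] by (simp_all add: matrix_inv_def)

lemma transpose_matrix_inv_symmetric:
  fixes A :: "real^'n^'n"
  assumes "invertible A" "transpose A = A"
  shows "transpose (matrix_inv A) = matrix_inv A"
proof -
  have "transpose (matrix_inv A) ** A = Finite_Cartesian_Product.mat 1"
    using matrix_inv_inverse[OF assms(1)] assms(2) by (metis matrix_transpose_mul transpose_mat)
  then have "transpose (matrix_inv A) ** A ** matrix_inv A = matrix_inv A"
    by (metis matrix_mul_lid)
  then show ?thesis
    using matrix_inv_inverse[OF assms(1)] by (metis matrix_mul_assoc matrix_mul_rid)
qed

lemma sum_squares_inner_scatter_inv:
  assumes "span (v ` {..<n}) = UNIV"
  shows "(\<Sum>j<n. (x \<bullet> (matrix_inv (scatter n v) *v v j))\<^sup>2) = x \<bullet> (matrix_inv (scatter n v) *v x)"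
proof -
  define S where "S = scatter n v"
  define T where "T = matrix_inv S"
  have S: "invertible S" "transpose S = S"
    unfolding S_def using invertible_scatter[OF assms] transpose_scatter by auto
  have T_sym: "x \<bullet> (T *v y) = (T *v x) \<bullet> y" for y
    using transpose_matrix_inv_symmetric[OF S] unfolding T_def
    by (metis dot_lmul_matrix vector_transpose_matrix)
  have "(\<Sum>j<n. (x \<bullet> (T *v v j))\<^sup>2) = (T *v x) \<bullet> (S *v (T *v x))"
    unfolding S_def scatter_quadratic_form T_sym by (simp add: inner_commute)
  also have "\<dots> = x \<bullet> (T *v x)"
    using matrix_inv_inverse(1)[OF S(1)] unfolding T_def
    by (simp add: matrix_vector_mul_assoc inner_commute)
  finally show ?thesis unfolding T_def S_def .
qed

theorem corollary4p4:
  fixes v :: "nat \<Rightarrow> real^'k" and n :: nat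
  assumes span: "span (v ` {..<n}) = UNIV"
    and sandwich: "beta_sandwich (1/2) n v"
  shows "\<exists>M :: real^'k^'k. transpose M = M
           \<and> (\<forall>x. 0 \<le> x \<bullet> (M *v x))
           \<and> (\<forall>i<n. v i \<bullet> (M *v v i) = 1)"
proof -
  define w where "w j = matrix_inv (scatter n v) *v v j" for j
  define G where "G i j = (v i \<bullet> w j)\<^sup>2" for i j
  have gt_half: "1/2 < v i \<bullet> w i" if "i < n" for i
    using sandwich that unfolding beta_sandwich_def ellipsoid_E_def w_def by auto
  have row_sum: "(\<Sum>j<n. G i j) = v i \<bullet> w i" for i
    unfolding G_def w_def using sum_squares_inner_scatter_inv[OF span] .
  have "(\<Sum>k\<in>{..<n}-{j}. G j k) < G i i" if "i < n" "j < n" for i j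
  proof -
    \<comment> \<open>\<open>t - t\<^sup>2 \<le> 1/4 < t\<^sup>2\<close> for \<open>t > 1/2\<close>: this is where \<open>\<beta> = 1/2\<close> enters.\<close>
    have "(\<Sum>k\<in>{..<n}-{j}. G j k) = v j \<bullet> w j - (v j \<bullet> w j)\<^sup>2"
      using sum.remove[of "{..<n}" j "G j"] row_sum[of j] that(2) by (simp add: G_def)
    also have "\<dots> \<le> 1/4"
      using zero_le_power2[of "v j \<bullet> w j - 1/2"] by (simp add: power2_eq_square algebra_simps)
    also have "\<dots> < G i i"
      using power_strict_mono[OF gt_half[OF that(1)], of 2] unfolding G_def by (simp add: power2_eq_square)
    finally show ?thesis .
  qed
  then obtain d where d: "\<forall>j<n. 0 \<le> d j" "\<forall>i<n. (\<Sum>j<n. G i j * d j) = 1"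
    using ex_nonneg_solution_if_diag_exceeds_offdiag_sums[of n G] by (auto simp: G_def)
  define M where "M = (\<Sum>j<n. d j *\<^sub>R outer_prod (w j) (w j))"
  have "transpose M = M"
    unfolding M_def by (rule transpose_weighted_outer_prod_sum)
  moreover have "0 \<le> x \<bullet> (M *v x)" for x
    unfolding M_def quadratic_form_weighted_outer_prod_sum using d(1) by (auto intro: sum_nonneg)
  moreover have "v i \<bullet> (M *v v i) = (\<Sum>j<n. G i j * d j)" for i
    unfolding M_def quadratic_form_weighted_outer_prod_sum G_def
    by (intro sum.cong) (simp_all add: inner_commute)
  ultimately show ?thesis
    using d(2) by auto
qed

end
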